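(* Let $\Omega\subset\mathbb{R}^d$ be compact, $\mu$ a probability measure on $\Omega$, and $\Phi_N=\{\varphi_j\}_{j=1}^N\subset\mathcal{C}(\Omega)$ with $\sup_{x\in\Omega}|\varphi_j(x)|\le1$ for $1\le j\le N$. Let $r\ge0$, $A_1^r(\Phi_N):=\{\sum_{j=1}^Nc_j\varphi_j:\sum_{j=1}^N|c_j|j^r\le1\}$, and let $\mathbf{F}\subset\mathcal{C}(\Omega)$ satisfy $\operatorname{dist}(\mathbf{F},A_1^r(\Phi_N))_\infty:=\sup_{f\in\mathbf{F}}\inf_{g\in A_1^r(\Phi_N)}\sup_{x\in\Omega}|f(x)-g(x)|<\infty$. Then for any integer $v$ with $1\le v\le N/2$, any $m\in\mathbb{N}$ and any $\xi=(\xi^1,\dots,\xi^m)\in\Omega^m$, $$\sigma_{2v}(\mathbf{F},\Phi_N)_{L_2(\Omega,\mu_\xi)}\le v^{-r-\frac12}+\operatorname{dist}(\mathbf{F},A_1^r(\Phi_N))_\infty.$$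
   Context: $\mu_\xi=\frac12\mu+\frac1{2m}\sum_{j=1}^m\delta_{\xi^j}$. For $1\le w\le N$, $\Sigma_w(\Phi_N)$ is the union of all spaces $\operatorname{span}\{\varphi_j:j\in J\}$ with $J\subset\{1,\dots,N\}$, $|J|=w$; $\sigma_w(f,\Phi_N)_X=\inf_{g\in\Sigma_w(\Phi_N)}\|f-g\|_X$ and $\sigma_w(\mathbf{F},\Phi_N)_X=\sup_{f\in\mathbf{F}}\sigma_w(f,\Phi_N)_X$. *)

theory Defs
  imports "HOL-Probability.Probability"
begin

definition sup_norm :: "'a set \<Rightarrow> ('a \<Rightarrow> real) \<Rightarrow> ereal" where
  "sup_norm \<Omega> h = (SUP x\<in>\<Omega>. ereal \<bar>h x\<bar>)"

text \<open>L2 norm with respect to mu_xi = 1/2 mu + 1/(2m) sum_{j=1}^m delta_{xi j}, written out.\<close>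
definition L2_mu_xi :: "'a measure \<Rightarrow> nat \<Rightarrow> (nat \<Rightarrow> 'a) \<Rightarrow> ('a \<Rightarrow> real) \<Rightarrow> real" where
  "L2_mu_xi \<mu> m \<xi> h =
     sqrt ((1/2) * (\<integral>x. (h x)\<^sup>2 \<partial>\<mu>) + (1 / (2 * real m)) * (\<Sum>j=1..m. (h (\<xi> j))\<^sup>2))"

definition Sigma_w :: "nat \<Rightarrow> nat \<Rightarrow> (nat \<Rightarrow> 'a \<Rightarrow> real) \<Rightarrow> ('a \<Rightarrow> real) set" where
  "Sigma_w w N \<phi> = (\<Union>J\<in>{J. J \<subseteq> {1..N} \<and> card J = w}. {(\<lambda>x. \<Sum>j\<in>J. c j * \<phi> j x) | c. True})"

definition sigma_w_L2 ::
  "nat \<Rightarrow> nat \<Rightarrow> (nat \<Rightarrow> 'a \<Rightarrow> real) \<Rightarrow> 'a measure \<Rightarrow> nat \<Rightarrow> (nat \<Rightarrow> 'a) \<Rightarrow> ('a \<Rightarrow> real) set \<Rightarrow> ereal" where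
  "sigma_w_L2 w N \<phi> \<mu> m \<xi> F =
     (SUP f\<in>F. INF g\<in>Sigma_w w N \<phi>. ereal (L2_mu_xi \<mu> m \<xi> (\<lambda>x. f x - g x)))"

definition A1r :: "real \<Rightarrow> nat \<Rightarrow> (nat \<Rightarrow> 'a \<Rightarrow> real) \<Rightarrow> ('a \<Rightarrow> real) set" where
  "A1r r N \<phi> = {(\<lambda>x. \<Sum>j=1..N. c j * \<phi> j x) | c. (\<Sum>j=1..N. \<bar>c j\<bar> * real j powr r) \<le> 1}"

definition dist_A1r_inf ::
  "'a set \<Rightarrow> real \<Rightarrow> nat \<Rightarrow> (nat \<Rightarrow> 'a \<Rightarrow> real) \<Rightarrow> ('a \<Rightarrow> real) set \<Rightarrow> ereal" where
  "dist_A1r_inf \<Omega> r N \<phi> F =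
     (SUP f\<in>F. INF g\<in>A1r r N \<phi>. sup_norm \<Omega> (\<lambda>x. f x - g x))"

end

(*
  Split g in A_1^r(Phi_N) into its first v terms and a tail.  Since the tail indices exceed v,
  the coefficients of the tail have l1-mass at most v^(-r).  Maurey's lemma approximates a
  nonnegative combination of atoms of norm at most 1 in a semi-inner product space by v of its
  atoms, with error mass/sqrt v; derandomized, each step adds an atom chosen below the weighted
  average of the candidates, and everything is computed in the Gram matrix of the atoms.  In
  L2(mu_xi) this gives a 2v-term approximant of g within v^(-r-1/2).  For f in F, Minkowski's
  inequality in L2(mu_xi) and the bound of the L2(mu_xi)-norm by the sup-norm (mu_xi is a
  probability measure) add the distance of f to A_1^r(Phi_N).
*)

theory Submission
  imports Defs
begin

section \<open>Gram forms and Maurey's lemma\<close>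

definition gram_form :: "'i set \<Rightarrow> ('i \<Rightarrow> 'i \<Rightarrow> real) \<Rightarrow> ('i \<Rightarrow> real) \<Rightarrow> ('i \<Rightarrow> real) \<Rightarrow> real"
  where "gram_form T G a c = (\<Sum>i\<in>T. \<Sum>j\<in>T. a i * c j * G i j)"

lemma gram_form_lincomb_left:
  "gram_form T G (\<lambda>i. x * a i + y * b i) c = x * gram_form T G a c + y * gram_form T G b c"
  unfolding gram_form_def by (simp add: algebra_simps sum.distrib sum_distrib_left)

lemma gram_form_lincomb_right:
  "gram_form T G a (\<lambda>i. x * b i + y * c i) = x * gram_form T G a b + y * gram_form T G a c"
  unfolding gram_form_def by (simp add: algebra_simps sum.distrib sum_distrib_left)

lemma gram_form_commute:
  assumes "\<And>i j. i \<in> T \<Longrightarrow> j \<in> T \<Longrightarrow> G i j = G j i"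
  shows "gram_form T G a c = gram_form T G c a"
  unfolding gram_form_def using assms
  by (subst sum.swap) (auto intro!: sum.cong simp: mult.commute)

lemma gram_form_lincomb_square:
  assumes "\<And>i j. i \<in> T \<Longrightarrow> j \<in> T \<Longrightarrow> G i j = G j i"
  shows "gram_form T G (\<lambda>i. x * a i + y * b i) (\<lambda>i. x * a i + y * b i)
    = x\<^sup>2 * gram_form T G a a + 2 * x * y * gram_form T G a b + y\<^sup>2 * gram_form T G b b"
  using gram_form_lincomb_left[of T G x a y b] gram_form_lincomb_right[of T G a x a y b]
    gram_form_lincomb_right[of T G b x a y b] gram_form_commute[OF assms, where a=b and c=a]
  by (simp add: power2_eq_square algebra_simps)

lemma gram_form_indicator_right:
  assumes "finite T" "j \<in> T"
  shows "gram_form T G a (\<lambda>i. if i = j then 1 else 0) = (\<Sum>i\<in>T. a i * G i j)"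
  unfolding gram_form_def using assms by (simp add: if_distrib if_distribR cong: if_cong)

lemma gram_form_indicator_indicator:
  assumes "finite T" "j \<in> T"
  shows "gram_form T G (\<lambda>i. if i = j then 1 else 0) (\<lambda>i. if i = j then 1 else 0) = G j j"
  using gram_form_indicator_right[OF assms] assms by (simp add: if_distrib if_distribR cong: if_cong)

lemma sum_gram_form_indicator_right:
  assumes "finite T"
  shows "(\<Sum>j\<in>T. w j * gram_form T G a (\<lambda>i. if i = j then 1 else 0)) = gram_form T G a w"
  using assms unfolding gram_form_def
  by (subst sum.swap) (simp add: if_distrib if_distribR sum_distrib_left algebra_simps cong: if_cong)

lemma sum_gram_form_shift_indicator:
  assumes "finite T" and "\<And>i j. i \<in> T \<Longrightarrow> j \<in> T \<Longrightarrow> G i j = G j i"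
  shows "(\<Sum>j\<in>T. w j * gram_form T G (\<lambda>i. a i - t * (if i = j then 1 else 0))
                                         (\<lambda>i. a i - t * (if i = j then 1 else 0)))
    = (\<Sum>j\<in>T. w j) * gram_form T G a a - 2 * t * gram_form T G a w
      + t\<^sup>2 * (\<Sum>j\<in>T. w j * G j j)"
proof -
  have shift: "gram_form T G (\<lambda>i. a i - t * (if i = j then 1 else 0)) (\<lambda>i. a i - t * (if i = j then 1 else 0))
      = gram_form T G a a - 2 * t * gram_form T G a (\<lambda>i. if i = j then 1 else 0) + t\<^sup>2 * G j j"
    if "j \<in> T" for j
    using gram_form_lincomb_square[OF assms(2), where x=1 and y="-t" and b="\<lambda>i. if i = j then 1 else 0"]
      gram_form_indicator_indicator[OF assms(1) that, of G]
    by simp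
  have "(\<Sum>j\<in>T. w j * gram_form T G (\<lambda>i. a i - t * (if i = j then 1 else 0))
                                         (\<lambda>i. a i - t * (if i = j then 1 else 0)))
      = (\<Sum>j\<in>T. w j * gram_form T G a a - 2 * t * (w j * gram_form T G a (\<lambda>i. if i = j then 1 else 0))
          + t\<^sup>2 * (w j * G j j))"
  proof (intro sum.cong refl)
    fix j assume "j \<in> T"
    show "w j * gram_form T G (\<lambda>i. a i - t * (if i = j then 1 else 0)) (\<lambda>i. a i - t * (if i = j then 1 else 0))
      = w j * gram_form T G a a - 2 * t * (w j * gram_form T G a (\<lambda>i. if i = j then 1 else 0))
          + t\<^sup>2 * (w j * G j j)"
      unfolding shift[OF \<open>j \<in> T\<close>] by (simp only: algebra_simps)
  qed
  also have "\<dots> = (\<Sum>j\<in>T. w j) * gram_form T G a a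
      - 2 * t * (\<Sum>j\<in>T. w j * gram_form T G a (\<lambda>i. if i = j then 1 else 0))
      + t\<^sup>2 * (\<Sum>j\<in>T. w j * G j j)"
    by (simp add: sum.distrib sum_subtractf sum_distrib_left sum_distrib_right)
  also have "\<dots> = (\<Sum>j\<in>T. w j) * gram_form T G a a - 2 * t * gram_form T G a w
      + t\<^sup>2 * (\<Sum>j\<in>T. w j * G j j)"
    by (simp only: sum_gram_form_indicator_right[OF assms(1)])
  finally show ?thesis .
qed

lemma ex_le_weighted_mean:
  fixes w E :: "'i \<Rightarrow> real"
  assumes "finite T" and "\<And>j. j \<in> T \<Longrightarrow> w j \<ge> 0" and "(\<Sum>j\<in>T. w j) > 0"
    and "(\<Sum>j\<in>T. w j * E j) \<le> (\<Sum>j\<in>T. w j) * B"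
  shows "\<exists>j\<in>T. E j \<le> B"
proof (rule ccontr)
  assume "\<not> (\<exists>j\<in>T. E j \<le> B)"
  then have less: "B < E j" if "j \<in> T" for j
    using that by auto
  have terms_nonneg: "0 \<le> w j * (E j - B)" if "j \<in> T" for j
    using assms(2)[OF that] less[OF that] by simp
  have "(\<Sum>j\<in>T. w j * (E j - B)) \<le> 0"
    using assms(4) by (simp add: right_diff_distrib sum_subtractf sum_distrib_right)
  moreover have "0 \<le> (\<Sum>j\<in>T. w j * (E j - B))"
    by (rule sum_nonneg) (rule terms_nonneg)
  ultimately have "(\<Sum>j\<in>T. w j * (E j - B)) = 0"
    by linarith
  then have "\<forall>j\<in>T. w j * (E j - B) = 0"
    using sum_nonneg_eq_0_iff[OF assms(1) terms_nonneg] by simp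
  then have "w j = 0" if "j \<in> T" for j
    using less[OF that] that by auto
  then show False
    using assms(3) by simp
qed

(* Averaged over j with weights w j, the shifts w - S * [i = j] sum to zero, so the cross term
   vanishes. *)
lemma sum_gram_form_shift_indicator_le:
  fixes G :: "'i \<Rightarrow> 'i \<Rightarrow> real"
  assumes fin: "finite T" and sym: "\<And>i j. i \<in> T \<Longrightarrow> j \<in> T \<Longrightarrow> G i j = G j i"
    and psd: "\<And>a. gram_form T G a a \<ge> 0" and diag: "\<And>j. j \<in> T \<Longrightarrow> G j j \<le> 1"
    and nonneg: "\<And>j. j \<in> T \<Longrightarrow> w j \<ge> 0"
  defines "S \<equiv> \<Sum>j\<in>T. w j"
  shows "(\<Sum>j\<in>T. w j * gram_form T G (\<lambda>i. \<alpha> * e i + \<beta> * w i - \<beta> * S * (if i = j then 1 else 0))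
                                        (\<lambda>i. \<alpha> * e i + \<beta> * w i - \<beta> * S * (if i = j then 1 else 0)))
    \<le> S * (\<alpha>\<^sup>2 * gram_form T G e e + \<beta>\<^sup>2 * S\<^sup>2)"
proof -
  define a where "a i = \<alpha> * e i + \<beta> * w i" for i
  define X W where "X = gram_form T G e e" and "W = gram_form T G w w"
  have "S \<ge> 0"
    unfolding S_def by (rule sum_nonneg) (rule nonneg)
  have Qa: "gram_form T G a a = \<alpha>\<^sup>2 * X + 2 * \<alpha> * \<beta> * gram_form T G e w + \<beta>\<^sup>2 * W"
    using gram_form_lincomb_square[OF sym, where x=\<alpha> and a=e and y=\<beta> and b=w]
    unfolding a_def[abs_def] X_def W_def .
  have Baw: "gram_form T G a w = \<alpha> * gram_form T G e w + \<beta> * W"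
    using gram_form_lincomb_left[of T G \<alpha> e \<beta> w w] unfolding a_def[abs_def] W_def .
  have "(\<Sum>j\<in>T. w j * gram_form T G (\<lambda>i. a i - \<beta> * S * (if i = j then 1 else 0))
                                    (\<lambda>i. a i - \<beta> * S * (if i = j then 1 else 0)))
      = S * gram_form T G a a - 2 * (\<beta> * S) * gram_form T G a w + (\<beta> * S)\<^sup>2 * (\<Sum>j\<in>T. w j * G j j)"
    unfolding S_def by (rule sum_gram_form_shift_indicator[OF fin sym])
  also have "\<dots> = S * \<alpha>\<^sup>2 * X + \<beta>\<^sup>2 * (S\<^sup>2 * (\<Sum>j\<in>T. w j * G j j) - S * W)"
    unfolding Qa Baw by (simp add: power2_eq_square algebra_simps)
  also have "\<dots> \<le> S * \<alpha>\<^sup>2 * X + \<beta>\<^sup>2 * (S\<^sup>2 * S)"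
  proof -
    have "(\<Sum>j\<in>T. w j * G j j) \<le> S"
      unfolding S_def by (rule sum_mono) (simp add: diag mult_left_le nonneg)
    then have "S\<^sup>2 * (\<Sum>j\<in>T. w j * G j j) \<le> S\<^sup>2 * S"
      by (simp add: mult_left_mono)
    moreover have "0 \<le> S * W"
      using \<open>S \<ge> 0\<close> psd[of w] unfolding W_def by simp
    ultimately show ?thesis
      by (intro add_left_mono mult_left_mono) auto
  qed
  also have "\<dots> = S * (\<alpha>\<^sup>2 * X + \<beta>\<^sup>2 * S\<^sup>2)"
    by (simp add: power2_eq_square algebra_simps)
  finally show ?thesis
    unfolding a_def X_def .
qed

(* d' j is the empirical mean of k + 1 draws: the first k average to d, the last one is the atom j
   with weight S.  Choosing j below the w-weighted mean of the errors derandomizes the argument. *)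
lemma maurey_step_error:
  fixes G :: "'i \<Rightarrow> 'i \<Rightarrow> real"
  assumes fin: "finite T" and sym: "\<And>i j. i \<in> T \<Longrightarrow> j \<in> T \<Longrightarrow> G i j = G j i"
    and psd: "\<And>a. gram_form T G a a \<ge> 0" and diag: "\<And>j. j \<in> T \<Longrightarrow> G j j \<le> 1"
    and nonneg: "\<And>j. j \<in> T \<Longrightarrow> w j \<ge> 0"
    and error: "real k * gram_form T G (\<lambda>i. w i - d i) (\<lambda>i. w i - d i) \<le> (\<Sum>j\<in>T. w j)\<^sup>2"
    and pos: "(\<Sum>j\<in>T. w j) > 0"
  defines "S \<equiv> \<Sum>j\<in>T. w j"
  defines "d' j i \<equiv> (real k * d i + S * (if i = j then 1 else 0)) / (real k + 1)"
  shows "\<exists>j\<in>T. real (Suc k) * gram_form T G (\<lambda>i. w i - d' j i) (\<lambda>i. w i - d' j i) \<le> S\<^sup>2"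
proof -
  define \<alpha> \<beta> where "\<alpha> = real k / (real k + 1)" and "\<beta> = 1 / (real k + 1)"
  define e where "e i = w i - d i" for i
  define X where "X = gram_form T G e e"
  have new_error: "(\<lambda>i. w i - d' j i) = (\<lambda>i. \<alpha> * e i + \<beta> * w i - \<beta> * S * (if i = j then 1 else 0))"
    for j
  proof
    fix i
    show "w i - d' j i = \<alpha> * e i + \<beta> * w i - \<beta> * S * (if i = j then 1 else 0)"
      unfolding d'_def \<alpha>_def \<beta>_def e_def by (simp add: divide_simps) (simp add: algebra_simps)
  qed
  have "(\<Sum>j\<in>T. w j * gram_form T G (\<lambda>i. w i - d' j i) (\<lambda>i. w i - d' j i))
      \<le> (\<Sum>j\<in>T. w j) * (\<alpha>\<^sup>2 * X + \<beta>\<^sup>2 * S\<^sup>2)"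
    unfolding new_error X_def S_def by (rule sum_gram_form_shift_indicator_le[OF fin sym psd diag nonneg])
  then have "\<exists>j\<in>T. gram_form T G (\<lambda>i. w i - d' j i) (\<lambda>i. w i - d' j i) \<le> \<alpha>\<^sup>2 * X + \<beta>\<^sup>2 * S\<^sup>2"
    using pos by (intro ex_le_weighted_mean[OF fin]) (simp_all add: nonneg)
  then obtain j where "j \<in> T"
    and below_mean: "gram_form T G (\<lambda>i. w i - d' j i) (\<lambda>i. w i - d' j i) \<le> \<alpha>\<^sup>2 * X + \<beta>\<^sup>2 * S\<^sup>2"
    by blast
  have "real (Suc k) * gram_form T G (\<lambda>i. w i - d' j i) (\<lambda>i. w i - d' j i)
      \<le> (real k + 1) * (\<alpha>\<^sup>2 * X + \<beta>\<^sup>2 * S\<^sup>2)"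
    using mult_left_mono[OF below_mean, of "real k + 1"] by (simp add: add.commute)
  also have "\<dots> = (real k * (real k * X) + S\<^sup>2) / (real k + 1)"
    unfolding \<alpha>_def \<beta>_def by (simp add: power_divide divide_simps power2_eq_square)
  also have "\<dots> \<le> (real k * S\<^sup>2 + S\<^sup>2) / (real k + 1)"
    using error unfolding X_def e_def S_def by (intro divide_right_mono add_right_mono mult_left_mono) auto
  also have "\<dots> = S\<^sup>2"
    by (simp add: field_simps)
  finally show ?thesis
    using \<open>j \<in> T\<close> by blast
qed

lemma maurey_step:
  fixes G :: "'i \<Rightarrow> 'i \<Rightarrow> real"
  assumes fin: "finite T" and sym: "\<And>i j. i \<in> T \<Longrightarrow> j \<in> T \<Longrightarrow> G i j = G j i"
    and psd: "\<And>a. gram_form T G a a \<ge> 0" and diag: "\<And>j. j \<in> T \<Longrightarrow> G j j \<le> 1"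
    and nonneg: "\<And>j. j \<in> T \<Longrightarrow> w j \<ge> 0"
    and support: "card {i\<in>T. d i \<noteq> 0} \<le> k"
    and error: "real k * gram_form T G (\<lambda>i. w i - d i) (\<lambda>i. w i - d i) \<le> (\<Sum>j\<in>T. w j)\<^sup>2"
  shows "\<exists>d'. card {i\<in>T. d' i \<noteq> 0} \<le> Suc k \<and>
           real (Suc k) * gram_form T G (\<lambda>i. w i - d' i) (\<lambda>i. w i - d' i) \<le> (\<Sum>j\<in>T. w j)\<^sup>2"
proof -
  have "(\<Sum>j\<in>T. w j) \<ge> 0"
    by (rule sum_nonneg) (rule nonneg)
  then consider "(\<Sum>j\<in>T. w j) = 0" | "(\<Sum>j\<in>T. w j) > 0"
    by fastforce
  then show ?thesis
  proof cases
    case 1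
    then have "\<forall>i\<in>T. w i = 0"
      using sum_nonneg_eq_0_iff[OF fin nonneg] by simp
    then have "gram_form T G (\<lambda>i. w i - 0) (\<lambda>i. w i - 0) = 0"
      by (simp add: gram_form_def)
    then show ?thesis
      using 1 by (intro exI[of _ "\<lambda>_. 0"]) simp
  next
    case 2
    define d' where "d' j i = (real k * d i + (\<Sum>j\<in>T. w j) * (if i = j then 1 else 0)) / (real k + 1)"
      for j i
    have "\<exists>j\<in>T. real (Suc k) * gram_form T G (\<lambda>i. w i - d' j i) (\<lambda>i. w i - d' j i) \<le> (\<Sum>j\<in>T. w j)\<^sup>2"
      unfolding d'_def by (rule maurey_step_error[OF fin sym psd diag nonneg error 2])
    then obtain j where "j \<in> T"
      and "real (Suc k) * gram_form T G (\<lambda>i. w i - d' j i) (\<lambda>i. w i - d' j i) \<le> (\<Sum>j\<in>T. w j)\<^sup>2"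
      by blast
    moreover have "card {i\<in>T. d' j i \<noteq> 0} \<le> Suc k"
    proof -
      have "{i\<in>T. d' j i \<noteq> 0} \<subseteq> insert j {i\<in>T. d i \<noteq> 0}"
        unfolding d'_def by auto
      then have "card {i\<in>T. d' j i \<noteq> 0} \<le> card (insert j {i\<in>T. d i \<noteq> 0})"
        using fin by (intro card_mono) auto
      also have "\<dots> \<le> Suc k"
        using support fin by (simp add: card_insert_if)
      finally show ?thesis .
    qed
    ultimately show ?thesis
      by blast
  qed
qed

lemma maurey_gram_form:
  fixes G :: "'i \<Rightarrow> 'i \<Rightarrow> real"
  assumes "finite T" and "\<And>i j. i \<in> T \<Longrightarrow> j \<in> T \<Longrightarrow> G i j = G j i"
    and "\<And>a. gram_form T G a a \<ge> 0" and "\<And>j. j \<in> T \<Longrightarrow> G j j \<le> 1"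
    and "\<And>j. j \<in> T \<Longrightarrow> w j \<ge> 0"
  shows "\<exists>d. card {i\<in>T. d i \<noteq> 0} \<le> k \<and>
           real k * gram_form T G (\<lambda>i. w i - d i) (\<lambda>i. w i - d i) \<le> (\<Sum>j\<in>T. w j)\<^sup>2"
proof (induction k)
  case 0
  show ?case
    by (intro exI[of _ "\<lambda>_. 0"]) simp
next
  case (Suc k)
  then obtain d where "card {i\<in>T. d i \<noteq> 0} \<le> k"
    and "real k * gram_form T G (\<lambda>i. w i - d i) (\<lambda>i. w i - d i) \<le> (\<Sum>j\<in>T. w j)\<^sup>2"
    by blast
  then show ?case
    using maurey_step[of T G w d k] assms by blast
qed

section \<open>The inner product of L2(mu_xi)\<close>

definition bounded_measurable :: "'a measure \<Rightarrow> ('a \<Rightarrow> real) set"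
  where "bounded_measurable \<mu> = {h \<in> borel_measurable \<mu>. \<exists>B. \<forall>x\<in>space \<mu>. \<bar>h x\<bar> \<le> B}"

lemma bounded_measurableI:
  "h \<in> borel_measurable \<mu> \<Longrightarrow> (\<And>x. x \<in> space \<mu> \<Longrightarrow> \<bar>h x\<bar> \<le> B) \<Longrightarrow> h \<in> bounded_measurable \<mu>"
  unfolding bounded_measurable_def by blast

lemma bounded_measurableE:
  assumes "h \<in> bounded_measurable \<mu>"
  obtains B where "h \<in> borel_measurable \<mu>" "B \<ge> 0" "\<And>x. x \<in> space \<mu> \<Longrightarrow> \<bar>h x\<bar> \<le> B"
proof -
  obtain B where "h \<in> borel_measurable \<mu>" "\<And>x. x \<in> space \<mu> \<Longrightarrow> \<bar>h x\<bar> \<le> B"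
    using assms unfolding bounded_measurable_def by blast
  then show ?thesis
    using that[of "max B 0"] by fastforce
qed

lemma bounded_measurable_const: "(\<lambda>x. c) \<in> bounded_measurable \<mu>"
  by (rule bounded_measurableI[of _ _ "\<bar>c\<bar>"]) auto

lemma bounded_measurable_add:
  assumes "h \<in> bounded_measurable \<mu>" "k \<in> bounded_measurable \<mu>"
  shows "(\<lambda>x. h x + k x) \<in> bounded_measurable \<mu>"
proof -
  obtain B C where "h \<in> borel_measurable \<mu>" "\<And>x. x \<in> space \<mu> \<Longrightarrow> \<bar>h x\<bar> \<le> B"
    and "k \<in> borel_measurable \<mu>" "\<And>x. x \<in> space \<mu> \<Longrightarrow> \<bar>k x\<bar> \<le> C"
    using assms by (metis bounded_measurableE)
  then show ?thesis
    by (intro bounded_measurableI[of _ _ "B + C"]) (auto intro: abs_triangle_ineq[THEN order_trans] add_mono)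
qed

lemma bounded_measurable_mult:
  assumes "h \<in> bounded_measurable \<mu>" "k \<in> bounded_measurable \<mu>"
  shows "(\<lambda>x. h x * k x) \<in> bounded_measurable \<mu>"
proof -
  obtain B C where "h \<in> borel_measurable \<mu>" "\<And>x. x \<in> space \<mu> \<Longrightarrow> \<bar>h x\<bar> \<le> B" "B \<ge> 0"
    and "k \<in> borel_measurable \<mu>" "\<And>x. x \<in> space \<mu> \<Longrightarrow> \<bar>k x\<bar> \<le> C" "C \<ge> 0"
    using assms by (metis bounded_measurableE)
  then show ?thesis
    by (intro bounded_measurableI[of _ _ "B * C"]) (auto simp: abs_mult intro!: mult_mono)
qed

lemma bounded_measurable_diff:
  assumes "h \<in> bounded_measurable \<mu>" "k \<in> bounded_measurable \<mu>"
  shows "(\<lambda>x. h x - k x) \<in> bounded_measurable \<mu>"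
  using bounded_measurable_add[OF assms(1) bounded_measurable_mult[OF bounded_measurable_const assms(2)],
      of "-1"]
  by simp

lemma bounded_measurable_lincomb:
  assumes "finite T" "\<And>i. i \<in> T \<Longrightarrow> u i \<in> bounded_measurable \<mu>"
  shows "(\<lambda>x. \<Sum>i\<in>T. a i * u i x) \<in> bounded_measurable \<mu>"
  using assms
proof (induction T rule: finite_induct)
  case empty
  then show ?case
    using bounded_measurable_const[of 0] by simp
next
  case (insert j T)
  then show ?case
    by (simp add: bounded_measurable_add bounded_measurable_mult bounded_measurable_const)
qed

lemma (in finite_measure) integrable_bounded_measurable:
  assumes "h \<in> bounded_measurable M"
  shows "integrable M h"
proof -
  obtain B where "h \<in> borel_measurable M" "\<And>x. x \<in> space M \<Longrightarrow> \<bar>h x\<bar> \<le> B"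
    using assms by (metis bounded_measurableE)
  then show ?thesis
    by (intro integrable_const_bound[where B=B]) auto
qed

definition inner_mu_xi :: "'a measure \<Rightarrow> nat \<Rightarrow> (nat \<Rightarrow> 'a) \<Rightarrow> ('a \<Rightarrow> real) \<Rightarrow> ('a \<Rightarrow> real) \<Rightarrow> real"
  where "inner_mu_xi \<mu> m \<xi> h k =
    1/2 * (\<integral>x. h x * k x \<partial>\<mu>) + 1 / (2 * real m) * (\<Sum>l=1..m. h (\<xi> l) * k (\<xi> l))"

lemma L2_mu_xi_eq_sqrt_inner: "L2_mu_xi \<mu> m \<xi> h = sqrt (inner_mu_xi \<mu> m \<xi> h h)"
  unfolding L2_mu_xi_def inner_mu_xi_def by (simp add: power2_eq_square)

lemma inner_mu_xi_commute: "inner_mu_xi \<mu> m \<xi> h k = inner_mu_xi \<mu> m \<xi> k h"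
  unfolding inner_mu_xi_def by (simp add: mult.commute)

lemma inner_mu_xi_nonneg: "inner_mu_xi \<mu> m \<xi> h h \<ge> 0"
  unfolding inner_mu_xi_def by (simp add: integral_nonneg_AE sum_nonneg)

lemma inner_mu_xi_scale_left: "inner_mu_xi \<mu> m \<xi> (\<lambda>x. c * h x) k = c * inner_mu_xi \<mu> m \<xi> h k"
  unfolding inner_mu_xi_def by (simp add: sum_distrib_left algebra_simps)

lemma (in finite_measure) inner_mu_xi_add_left:
  assumes "h \<in> bounded_measurable M" "k \<in> bounded_measurable M" "l \<in> bounded_measurable M"
  shows "inner_mu_xi M m \<xi> (\<lambda>x. h x + k x) l = inner_mu_xi M m \<xi> h l + inner_mu_xi M m \<xi> k l"
proof -
  have "integrable M (\<lambda>x. h x * l x)" "integrable M (\<lambda>x. k x * l x)"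
    using assms by (auto intro: integrable_bounded_measurable bounded_measurable_mult)
  then show ?thesis
    unfolding inner_mu_xi_def by (simp add: distrib_right sum.distrib algebra_simps)
qed

lemma (in finite_measure) inner_mu_xi_lincomb_left:
  assumes "finite T" "\<And>i. i \<in> T \<Longrightarrow> u i \<in> bounded_measurable M" "k \<in> bounded_measurable M"
  shows "inner_mu_xi M m \<xi> (\<lambda>x. \<Sum>i\<in>T. a i * u i x) k = (\<Sum>i\<in>T. a i * inner_mu_xi M m \<xi> (u i) k)"
  using assms
proof (induction T rule: finite_induct)
  case empty
  then show ?case
    using inner_mu_xi_scale_left[of M m \<xi> 0 k k] by simp
next
  case (insert j T)
  then show ?case
    by (simp add: inner_mu_xi_add_left inner_mu_xi_scale_left bounded_measurable_mult
        bounded_measurable_const bounded_measurable_lincomb)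
qed

lemma (in finite_measure) inner_mu_xi_gram_form:
  assumes "finite T" "\<And>i. i \<in> T \<Longrightarrow> u i \<in> bounded_measurable M"
  shows "inner_mu_xi M m \<xi> (\<lambda>x. \<Sum>i\<in>T. a i * u i x) (\<lambda>x. \<Sum>i\<in>T. a i * u i x)
    = gram_form T (\<lambda>i j. inner_mu_xi M m \<xi> (u i) (u j)) a a"
  using assms
  apply (simp add: inner_mu_xi_lincomb_left bounded_measurable_lincomb gram_form_def sum_distrib_left
      inner_mu_xi_commute[of M m \<xi> "u i" "(\<lambda>x. \<Sum>i\<in>T. a i * u i x)" for i] mult.assoc)
  by (subst sum.swap) (simp add: algebra_simps)

lemma quadratic_nonneg_imp_discriminant_nonpos:
  fixes a b c :: real
  assumes "c \<ge> 0" and "\<And>t. 0 \<le> a - 2 * t * b + t\<^sup>2 * c"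
  shows "b\<^sup>2 \<le> a * c"
proof (cases "c = 0")
  case True
  have "b = 0"
  proof (rule ccontr)
    assume "b \<noteq> 0"
    then show False
      using assms(2)[of "(a + 1) / (2 * b)"] True by simp
  qed
  then show ?thesis
    using True by simp
next
  case False
  then have "0 \<le> a - b\<^sup>2 / c"
    using assms(2)[of "b / c"] by (simp add: power2_eq_square)
  then show ?thesis
    using assms(1) False by (simp add: field_simps)
qed

lemma (in finite_measure) inner_mu_xi_Cauchy_Schwarz:
  assumes "h \<in> bounded_measurable M" "k \<in> bounded_measurable M"
  shows "(inner_mu_xi M m \<xi> h k)\<^sup>2 \<le> inner_mu_xi M m \<xi> h h * inner_mu_xi M m \<xi> k k"
proof (rule quadratic_nonneg_imp_discriminant_nonpos[OF inner_mu_xi_nonneg])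
  fix t
  define g where "g = (\<lambda>x. h x + (- t) * k x)"
  have scaled: "(\<lambda>x. (- t) * k x) \<in> bounded_measurable M"
    by (rule bounded_measurable_mult[OF bounded_measurable_const assms(2)])
  have "g \<in> bounded_measurable M"
    unfolding g_def by (rule bounded_measurable_add[OF assms(1) scaled])
  have expand: "inner_mu_xi M m \<xi> g l = inner_mu_xi M m \<xi> h l - t * inner_mu_xi M m \<xi> k l"
    if "l \<in> bounded_measurable M" for l
    using inner_mu_xi_add_left[OF assms(1) scaled that] inner_mu_xi_scale_left[of M m \<xi> "- t" k l]
    unfolding g_def by simp
  have "inner_mu_xi M m \<xi> g g = inner_mu_xi M m \<xi> g h - t * inner_mu_xi M m \<xi> g k"
    using expand[OF \<open>g \<in> bounded_measurable M\<close>]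
      inner_mu_xi_commute[of M m \<xi> h g] inner_mu_xi_commute[of M m \<xi> k g] by simp
  also have "\<dots> = inner_mu_xi M m \<xi> h h - 2 * t * inner_mu_xi M m \<xi> h k + t\<^sup>2 * inner_mu_xi M m \<xi> k k"
    unfolding expand[OF assms(1)] expand[OF assms(2)] inner_mu_xi_commute[of M m \<xi> k h]
    by (simp add: power2_eq_square algebra_simps)
  finally show "0 \<le> inner_mu_xi M m \<xi> h h - 2 * t * inner_mu_xi M m \<xi> h k + t\<^sup>2 * inner_mu_xi M m \<xi> k k"
    using inner_mu_xi_nonneg[of M m \<xi> g] by simp
qed

lemma (in finite_measure) L2_mu_xi_triangle:
  assumes "h \<in> bounded_measurable M" "k \<in> bounded_measurable M"
  shows "L2_mu_xi M m \<xi> (\<lambda>x. h x + k x) \<le> L2_mu_xi M m \<xi> h + L2_mu_xi M m \<xi> k"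
proof -
  define g where "g = (\<lambda>x. h x + k x)"
  define H K where "H = inner_mu_xi M m \<xi> h h" and "K = inner_mu_xi M m \<xi> k k"
  have "H \<ge> 0" "K \<ge> 0"
    unfolding H_def K_def by (simp_all add: inner_mu_xi_nonneg)
  have "g \<in> bounded_measurable M"
    unfolding g_def by (rule bounded_measurable_add[OF assms])
  have expand: "inner_mu_xi M m \<xi> g l = inner_mu_xi M m \<xi> h l + inner_mu_xi M m \<xi> k l"
    if "l \<in> bounded_measurable M" for l
    unfolding g_def by (rule inner_mu_xi_add_left[OF assms that])
  have "inner_mu_xi M m \<xi> h k \<le> sqrt H * sqrt K"
    using inner_mu_xi_Cauchy_Schwarz[OF assms, of m \<xi>] unfolding H_def K_def
    by (simp add: real_le_rsqrt flip: real_sqrt_mult)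
  then have "inner_mu_xi M m \<xi> g g \<le> (sqrt H + sqrt K)\<^sup>2"
    using \<open>H \<ge> 0\<close> \<open>K \<ge> 0\<close>
    unfolding expand[OF \<open>g \<in> bounded_measurable M\<close>] inner_mu_xi_commute[of M m \<xi> h g]
      inner_mu_xi_commute[of M m \<xi> k g] expand[OF assms(1)] expand[OF assms(2)]
      inner_mu_xi_commute[of M m \<xi> k h] H_def[symmetric] K_def[symmetric]
    by (simp add: power2_eq_square algebra_simps)
  from real_le_lsqrt[OF _ this] show ?thesis
    unfolding L2_mu_xi_eq_sqrt_inner g_def[symmetric] H_def[symmetric] K_def[symmetric]
    using \<open>H \<ge> 0\<close> \<open>K \<ge> 0\<close> by simp
qed

lemma (in prob_space) L2_mu_xi_le_bound:
  assumes "h \<in> borel_measurable M" and bound: "\<And>x. x \<in> space M \<Longrightarrow> \<bar>h x\<bar> \<le> s"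
    and "\<And>l. l \<in> {1..m} \<Longrightarrow> \<xi> l \<in> space M" and "m \<ge> 1"
  shows "L2_mu_xi M m \<xi> h \<le> s"
proof -
  have "s \<ge> 0"
    using bound[of "\<xi> 1"] assms(3,4) by fastforce
  have square: "h x * h x \<le> s\<^sup>2" if "x \<in> space M" for x
    using bound[OF that] abs_le_square_iff[of "h x" s] \<open>s \<ge> 0\<close> by (simp add: power2_eq_square)
  have "h \<in> bounded_measurable M"
    using assms(1) bound by (rule bounded_measurableI)
  then have "(\<integral>x. h x * h x \<partial>M) \<le> (\<integral>x. s\<^sup>2 \<partial>M)"
    using square
    by (intro integral_mono integrable_bounded_measurable bounded_measurable_mult bounded_measurable_const)
      auto
  moreover have "(\<Sum>l=1..m. h (\<xi> l) * h (\<xi> l)) \<le> real m * s\<^sup>2"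
    using sum_mono[of "{1..m}" "\<lambda>l. h (\<xi> l) * h (\<xi> l)" "\<lambda>_. s\<^sup>2"] square assms(3) by simp
  ultimately have "inner_mu_xi M m \<xi> h h \<le> 1/2 * s\<^sup>2 + 1 / (2 * real m) * (real m * s\<^sup>2)"
    unfolding inner_mu_xi_def by (intro add_mono mult_left_mono) (auto simp: prob_space)
  also have "\<dots> = s\<^sup>2"
    using assms(4) by simp
  finally have "inner_mu_xi M m \<xi> h h \<le> s\<^sup>2" .
  then show ?thesis
    unfolding L2_mu_xi_eq_sqrt_inner using \<open>s \<ge> 0\<close> by (simp add: real_le_lsqrt)
qed

section \<open>Sparse approximation of A_1^r(Phi_N)\<close>

lemma A1r_tail_sum_le:
  fixes c :: "nat \<Rightarrow> real"
  assumes "(\<Sum>j=1..N. \<bar>c j\<bar> * real j powr r) \<le> 1" and "r \<ge> 0" and "v \<ge> 1"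
  shows "(\<Sum>j=v+1..N. \<bar>c j\<bar>) \<le> real v powr (- r)"
proof -
  have "(\<Sum>j=v+1..N. \<bar>c j\<bar>) * real v powr r = (\<Sum>j=v+1..N. \<bar>c j\<bar> * real v powr r)"
    by (simp add: sum_distrib_right)
  also have "\<dots> \<le> (\<Sum>j=v+1..N. \<bar>c j\<bar> * real j powr r)"
    using assms(2,3) by (intro sum_mono mult_left_mono powr_mono2) auto
  also have "\<dots> \<le> (\<Sum>j=1..N. \<bar>c j\<bar> * real j powr r)"
    by (rule sum_mono2) auto
  finally have "(\<Sum>j=v+1..N. \<bar>c j\<bar>) * real v powr r \<le> 1"
    using assms(1) by linarith
  then show ?thesis
    using assms(3) by (simp add: powr_minus_divide pos_le_divide_eq)
qed

lemma sum_in_Sigma_w: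
  assumes "K \<subseteq> {1..N}" and "card K \<le> w" and "w \<le> N"
  shows "(\<lambda>x. \<Sum>j\<in>K. e j * \<phi> j x) \<in> Sigma_w w N \<phi>"
proof -
  obtain J where J: "K \<subseteq> J" "J \<subseteq> {1..N}" "card J = w"
    using exists_subset_between[of K w "{1..N}"] assms by auto
  have "(\<Sum>j\<in>J. (if j \<in> K then e j else 0) * \<phi> j x) = (\<Sum>j\<in>K. e j * \<phi> j x)" for x
    using J finite_subset[OF J(2)] by (intro sum.mono_neutral_cong_right) auto
  then have "(\<lambda>x. \<Sum>j\<in>K. e j * \<phi> j x) = (\<lambda>x. \<Sum>j\<in>J. (if j \<in> K then e j else 0) * \<phi> j x)"
    by simp
  then show ?thesis
    unfolding Sigma_w_def using J by (intro UN_I[of J]) auto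
qed

lemma bounded_measurable_A1r:
  assumes "\<And>j. j \<in> {1..N} \<Longrightarrow> \<phi> j \<in> bounded_measurable \<mu>" and "g \<in> A1r r N \<phi>"
  shows "g \<in> bounded_measurable \<mu>"
  using assms unfolding A1r_def by (auto intro: bounded_measurable_lincomb)

lemma bounded_measurable_Sigma_w:
  assumes "\<And>j. j \<in> {1..N} \<Longrightarrow> \<phi> j \<in> bounded_measurable \<mu>" and "h \<in> Sigma_w w N \<phi>"
  shows "h \<in> bounded_measurable \<mu>"
proof -
  obtain J c where "J \<subseteq> {1..N}" and "h = (\<lambda>x. \<Sum>j\<in>J. c j * \<phi> j x)"
    using assms(2) unfolding Sigma_w_def by blast
  then show ?thesis
    using assms(1) finite_subset[OF \<open>J \<subseteq> {1..N}\<close>] \<open>J \<subseteq> {1..N}\<close>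
    by (simp add: bounded_measurable_lincomb subset_iff)
qed

lemma (in prob_space) maurey_L2_mu_xi:
  assumes "finite T" and "\<And>i. i \<in> T \<Longrightarrow> u i \<in> borel_measurable M"
    and "\<And>i x. i \<in> T \<Longrightarrow> x \<in> space M \<Longrightarrow> \<bar>u i x\<bar> \<le> 1"
    and "\<And>i. i \<in> T \<Longrightarrow> w i \<ge> 0"
    and "\<And>l. l \<in> {1..m} \<Longrightarrow> \<xi> l \<in> space M" and "m \<ge> 1"
  shows "\<exists>d. card {i\<in>T. d i \<noteq> 0} \<le> k \<and>
           real k * (L2_mu_xi M m \<xi> (\<lambda>x. \<Sum>i\<in>T. (w i - d i) * u i x))\<^sup>2 \<le> (\<Sum>i\<in>T. w i)\<^sup>2"
proof -
  define G where "G i j = inner_mu_xi M m \<xi> (u i) (u j)" for i j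
  have u: "u i \<in> bounded_measurable M" if "i \<in> T" for i
    using assms(2,3) that by (intro bounded_measurableI[of _ _ 1])
  have gram: "inner_mu_xi M m \<xi> (\<lambda>x. \<Sum>i\<in>T. a i * u i x) (\<lambda>x. \<Sum>i\<in>T. a i * u i x) = gram_form T G a a"
    for a
    unfolding G_def by (rule inner_mu_xi_gram_form[OF assms(1) u])
  have sym: "G i j = G j i" for i j
    unfolding G_def by (rule inner_mu_xi_commute)
  have psd: "gram_form T G a a \<ge> 0" for a
    unfolding gram[symmetric] by (rule inner_mu_xi_nonneg)
  have diag: "G i i \<le> 1" if "i \<in> T" for i
  proof -
    have "sqrt (G i i) \<le> 1"
      using L2_mu_xi_le_bound[OF assms(2)[OF that] assms(3)[OF that] assms(5,6)]
      unfolding G_def L2_mu_xi_eq_sqrt_inner .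
    then show ?thesis
      by simp
  qed
  obtain d where "card {i\<in>T. d i \<noteq> 0} \<le> k"
    and "real k * gram_form T G (\<lambda>i. w i - d i) (\<lambda>i. w i - d i) \<le> (\<Sum>i\<in>T. w i)\<^sup>2"
    using maurey_gram_form[of T G w k] assms(1,4) sym psd diag by blast
  moreover have "(L2_mu_xi M m \<xi> (\<lambda>x. \<Sum>i\<in>T. (w i - d i) * u i x))\<^sup>2
      = gram_form T G (\<lambda>i. w i - d i) (\<lambda>i. w i - d i)"
    unfolding L2_mu_xi_eq_sqrt_inner gram using psd[of "\<lambda>i. w i - d i"] by simp
  ultimately show ?thesis
    by auto
qed

lemma mult_square_le_imp_le_powr:
  fixes L S r :: real
  assumes "real v * L\<^sup>2 \<le> S\<^sup>2" and "0 \<le> S" and "S \<le> real v powr (- r)" and "v \<ge> 1"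
  shows "L \<le> real v powr (- r - 1/2)"
proof (rule power2_le_imp_le)
  have "L\<^sup>2 \<le> S\<^sup>2 / real v"
    using assms(1,4) by (simp add: pos_le_divide_eq mult.commute)
  also have "\<dots> \<le> (real v powr (- r))\<^sup>2 / real v"
    using assms(2,3) by (intro divide_right_mono power_mono) auto
  also have "\<dots> = (real v powr (- r - 1/2))\<^sup>2"
    using assms(4) by (simp add: powr_diff powr_half_sqrt power_divide)
  finally show "L\<^sup>2 \<le> (real v powr (- r - 1/2))\<^sup>2" .
qed simp

lemma sum_add_sum_in_Sigma_w:
  assumes "H \<union> T \<subseteq> {1..N}" and "H \<inter> T = {}"
    and "card H + card {j\<in>T. d j \<noteq> 0} \<le> w" and "w \<le> N"
  shows "(\<lambda>x. (\<Sum>j\<in>H. c j * \<phi> j x) + (\<Sum>j\<in>T. d j * \<phi> j x)) \<in> Sigma_w w N \<phi>"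
proof -
  define D where "D = {j\<in>T. d j \<noteq> 0}"
  define e where "e j = (if j \<in> H then c j else d j)" for j
  have "finite H" "finite T" "H \<inter> D = {}"
    using assms(1,2) finite_subset[of _ "{1..N}"] unfolding D_def by auto
  have "(\<Sum>j\<in>H. c j * \<phi> j x) + (\<Sum>j\<in>T. d j * \<phi> j x) = (\<Sum>j\<in>H \<union> D. e j * \<phi> j x)" for x
  proof -
    have "(\<Sum>j\<in>T. d j * \<phi> j x) = (\<Sum>j\<in>D. e j * \<phi> j x)"
      using \<open>finite T\<close> assms(2) unfolding D_def e_def by (intro sum.mono_neutral_cong_right) auto
    moreover have "(\<Sum>j\<in>H. c j * \<phi> j x) = (\<Sum>j\<in>H. e j * \<phi> j x)"
      unfolding e_def by simp
    ultimately show ?thesis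
      using \<open>finite H\<close> \<open>finite T\<close> \<open>H \<inter> D = {}\<close> unfolding D_def by (simp add: sum.union_disjoint)
  qed
  moreover have "(\<lambda>x. \<Sum>j\<in>H \<union> D. e j * \<phi> j x) \<in> Sigma_w w N \<phi>"
    using assms card_Un_le[of H D] unfolding D_def by (intro sum_in_Sigma_w) auto
  ultimately show ?thesis
    by simp
qed

lemma (in prob_space) A1r_sparse_approx:
  assumes \<phi>: "\<And>j. j \<in> {1..N} \<Longrightarrow> \<phi> j \<in> borel_measurable M"
    and \<phi>_le_1: "\<And>j x. j \<in> {1..N} \<Longrightarrow> x \<in> space M \<Longrightarrow> \<bar>\<phi> j x\<bar> \<le> 1"
    and "r \<ge> 0" and "1 \<le> v" and "2 * v \<le> N"
    and \<xi>: "\<And>l. l \<in> {1..m} \<Longrightarrow> \<xi> l \<in> space M" and "m \<ge> 1"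
    and "g \<in> A1r r N \<phi>"
  shows "\<exists>h\<in>Sigma_w (2 * v) N \<phi>. L2_mu_xi M m \<xi> (\<lambda>x. g x - h x) \<le> real v powr (- r - 1/2)"
proof -
  obtain c where g: "g = (\<lambda>x. \<Sum>j=1..N. c j * \<phi> j x)"
    and c: "(\<Sum>j=1..N. \<bar>c j\<bar> * real j powr r) \<le> 1"
    using assms(8) unfolding A1r_def by blast
  define H T where "H = {1..v}" and "T = {v+1..N}"
  have HT: "{1..N} = H \<union> T" "H \<inter> T = {}" "finite H" "finite T"
    unfolding H_def T_def using assms(4,5) by auto
  define u where "u j x = sgn (c j) * \<phi> j x" for j x
  have "u j \<in> borel_measurable M" if "j \<in> T" for j
    using \<phi>[of j] that unfolding u_def HT(1) by simp
  moreover have "\<bar>u j x\<bar> \<le> 1" if "j \<in> T" "x \<in> space M" for j x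
    using \<phi>_le_1[of j x] that unfolding u_def HT(1) by (simp add: abs_mult abs_sgn_eq)
  ultimately obtain d where d: "card {j\<in>T. d j \<noteq> 0} \<le> v"
    and error: "real v * (L2_mu_xi M m \<xi> (\<lambda>x. \<Sum>j\<in>T. (\<bar>c j\<bar> - d j) * u j x))\<^sup>2 \<le> (\<Sum>j\<in>T. \<bar>c j\<bar>)\<^sup>2"
    using maurey_L2_mu_xi[where T=T and u=u and w="\<lambda>j. \<bar>c j\<bar>" and k=v and m=m and \<xi>=\<xi>]
      HT(4) \<xi> assms(7) by auto
  define h where "h x = (\<Sum>j\<in>H. c j * \<phi> j x) + (\<Sum>j\<in>T. (d j * sgn (c j)) * \<phi> j x)" for x
  have "h \<in> Sigma_w (2 * v) N \<phi>"
  proof -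
    have "card {j\<in>T. d j * sgn (c j) \<noteq> 0} \<le> card {j\<in>T. d j \<noteq> 0}"
      using HT(4) by (intro card_mono) auto
    then show ?thesis
      unfolding h_def[abs_def] using HT(1,2) d assms(5)
      by (intro sum_add_sum_in_Sigma_w) (auto simp: H_def)
  qed
  moreover have "(\<lambda>x. g x - h x) = (\<lambda>x. \<Sum>j\<in>T. (\<bar>c j\<bar> - d j) * u j x)"
  proof
    fix x
    have "c j * \<phi> j x = \<bar>c j\<bar> * u j x" for j
      unfolding u_def by (simp add: abs_mult_sgn mult.assoc[symmetric])
    then have "g x = (\<Sum>j\<in>H. c j * \<phi> j x) + (\<Sum>j\<in>T. \<bar>c j\<bar> * u j x)"
      unfolding g HT(1) by (simp add: sum.union_disjoint[OF HT(3,4,2)])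
    moreover have "h x = (\<Sum>j\<in>H. c j * \<phi> j x) + (\<Sum>j\<in>T. d j * u j x)"
      unfolding h_def u_def by (simp add: mult.assoc)
    ultimately show "g x - h x = (\<Sum>j\<in>T. (\<bar>c j\<bar> - d j) * u j x)"
      by (simp add: sum_subtractf left_diff_distrib)
  qed
  moreover have "L2_mu_xi M m \<xi> (\<lambda>x. \<Sum>j\<in>T. (\<bar>c j\<bar> - d j) * u j x) \<le> real v powr (- r - 1/2)"
    using error A1r_tail_sum_le[OF c assms(3,4)] assms(4) unfolding T_def
    by (intro mult_square_le_imp_le_powr) (auto intro: sum_nonneg)
  ultimately show ?thesis
    by metis
qed

lemma sup_norm_ge_abs: "x \<in> \<Omega> \<Longrightarrow> ereal \<bar>h x\<bar> \<le> sup_norm \<Omega> h"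
  unfolding sup_norm_def by (rule SUP_upper)

lemma sup_norm_nonneg: "\<Omega> \<noteq> {} \<Longrightarrow> 0 \<le> sup_norm \<Omega> h"
  using sup_norm_ge_abs[of _ \<Omega> h] by (force intro: order_trans[rotated])

lemma (in prob_space) INF_Sigma_w_L2_mu_xi_le:
  assumes \<phi>: "\<And>j. j \<in> {1..N} \<Longrightarrow> \<phi> j \<in> borel_measurable M"
    and \<phi>_le_1: "\<And>j x. j \<in> {1..N} \<Longrightarrow> x \<in> space M \<Longrightarrow> \<bar>\<phi> j x\<bar> \<le> 1"
    and "r \<ge> 0" and "1 \<le> v" and "2 * v \<le> N"
    and \<xi>: "\<And>l. l \<in> {1..m} \<Longrightarrow> \<xi> l \<in> space M" and "m \<ge> 1"
    and f: "f \<in> borel_measurable M" and g: "g \<in> A1r r N \<phi>"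
  shows "(INF h\<in>Sigma_w (2 * v) N \<phi>. ereal (L2_mu_xi M m \<xi> (\<lambda>x. f x - h x)))
           \<le> ereal (real v powr (- r - 1/2)) + sup_norm (space M) (\<lambda>x. f x - g x)"
proof (cases "sup_norm (space M) (\<lambda>x. f x - g x)")
  case (real s)
  obtain h where h: "h \<in> Sigma_w (2 * v) N \<phi>"
    and gh: "L2_mu_xi M m \<xi> (\<lambda>x. g x - h x) \<le> real v powr (- r - 1/2)"
    using A1r_sparse_approx[where \<phi>=\<phi> and \<xi>=\<xi>] \<phi> \<phi>_le_1 assms(3-5) \<xi> assms(7) g by blast
  have \<phi>_bounded: "\<phi> j \<in> bounded_measurable M" if "j \<in> {1..N}" for j
    using \<phi> \<phi>_le_1 that by (intro bounded_measurableI[of _ _ 1])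
  have g_bounded: "g \<in> bounded_measurable M"
    by (rule bounded_measurable_A1r[OF \<phi>_bounded g])
  have fg_le: "\<bar>f x - g x\<bar> \<le> s" if "x \<in> space M" for x
    using sup_norm_ge_abs[OF that, of "\<lambda>x. f x - g x"] real by simp
  have fg_measurable: "(\<lambda>x. f x - g x) \<in> borel_measurable M"
    using f g_bounded unfolding bounded_measurable_def by (blast intro: borel_measurable_diff)
  have "L2_mu_xi M m \<xi> (\<lambda>x. f x - h x)
      \<le> L2_mu_xi M m \<xi> (\<lambda>x. f x - g x) + L2_mu_xi M m \<xi> (\<lambda>x. g x - h x)"
    using L2_mu_xi_triangle[OF bounded_measurableI[OF fg_measurable fg_le]
        bounded_measurable_diff[OF g_bounded bounded_measurable_Sigma_w[OF \<phi>_bounded h]]]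
    by simp
  also have "\<dots> \<le> s + real v powr (- r - 1/2)"
    using L2_mu_xi_le_bound[where \<xi>=\<xi>, OF fg_measurable fg_le \<xi> assms(7)] gh by simp
  finally show ?thesis
    using h real by (intro INF_lower2[of h]) simp_all
next
  case MInf
  then show ?thesis
    using sup_norm_nonneg[of "space M" "\<lambda>x. f x - g x"] \<xi>[of 1] assms(7) by auto
qed simp

lemma (in prob_space) sigma_w_L2_le_dist_A1r:
  assumes "\<And>j. j \<in> {1..N} \<Longrightarrow> \<phi> j \<in> borel_measurable M"
    and "\<And>j x. j \<in> {1..N} \<Longrightarrow> x \<in> space M \<Longrightarrow> \<bar>\<phi> j x\<bar> \<le> 1"
    and "r \<ge> 0" and F: "\<And>f. f \<in> F \<Longrightarrow> f \<in> borel_measurable M"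
    and "1 \<le> v" and "2 * v \<le> N"
    and \<xi>: "\<And>l. l \<in> {1..m} \<Longrightarrow> \<xi> l \<in> space M" and "m \<ge> 1"
  shows "sigma_w_L2 (2 * v) N \<phi> M m \<xi> F
           \<le> ereal (real v powr (- r - 1/2)) + dist_A1r_inf (space M) r N \<phi> F"
proof -
  define a where "a = ereal (real v powr (- r - 1/2))"
  have "A1r r N \<phi> \<noteq> {}"
    unfolding A1r_def by (auto intro!: exI[of _ "\<lambda>_. 0"])
  have "space M \<noteq> {}"
    using \<xi>[of 1] assms(8) by auto
  have "(INF h\<in>Sigma_w (2 * v) N \<phi>. ereal (L2_mu_xi M m \<xi> (\<lambda>x. f x - h x)))
      \<le> a + dist_A1r_inf (space M) r N \<phi> F" if "f \<in> F" for f
  proof -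
    have "(INF h\<in>Sigma_w (2 * v) N \<phi>. ereal (L2_mu_xi M m \<xi> (\<lambda>x. f x - h x)))
        \<le> (INF g\<in>A1r r N \<phi>. a + sup_norm (space M) (\<lambda>x. f x - g x))"
      unfolding a_def using assms(1-3,5-8) F[OF that]
      by (intro INF_greatest INF_Sigma_w_L2_mu_xi_le) auto
    also have "\<dots> = a + (INF g\<in>A1r r N \<phi>. sup_norm (space M) (\<lambda>x. f x - g x))"
      unfolding a_def using \<open>A1r r N \<phi> \<noteq> {}\<close> sup_norm_nonneg[OF \<open>space M \<noteq> {}\<close>]
      by (intro INF_ereal_add_right) auto
    also have "\<dots> \<le> a + dist_A1r_inf (space M) r N \<phi> F"
      unfolding dist_A1r_inf_def using that by (intro add_left_mono SUP_upper)
    finally show ?thesis .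
  qed
  then show ?thesis
    unfolding sigma_w_L2_def a_def[symmetric] by (rule SUP_least)
qed

theorem proposition3p1:
  fixes \<Omega> :: "(real^'d) set" and \<mu> :: "(real^'d) measure"
    and \<phi> :: "nat \<Rightarrow> real^'d \<Rightarrow> real" and N :: nat and r :: real
    and F :: "(real^'d \<Rightarrow> real) set" and v m :: nat and \<xi> :: "nat \<Rightarrow> real^'d"
  assumes "compact \<Omega>"
    and "prob_space \<mu>" and "space \<mu> = \<Omega>" and "sets \<mu> = sets (restrict_space borel \<Omega>)"
    and "\<And>j. j \<in> {1..N} \<Longrightarrow> continuous_on \<Omega> (\<phi> j)"
    and "\<And>j x. j \<in> {1..N} \<Longrightarrow> x \<in> \<Omega> \<Longrightarrow> \<bar>\<phi> j x\<bar> \<le> 1"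
    and "r \<ge> 0"
    and "\<And>f. f \<in> F \<Longrightarrow> continuous_on \<Omega> f"
    and "dist_A1r_inf \<Omega> r N \<phi> F < \<infinity>"
    and "1 \<le> v" and "2 * v \<le> N"
    and "1 \<le> m" and "\<And>j. j \<in> {1..m} \<Longrightarrow> \<xi> j \<in> \<Omega>"
  shows "sigma_w_L2 (2 * v) N \<phi> \<mu> m \<xi> F
           \<le> ereal (real v powr (- r - 1/2)) + dist_A1r_inf \<Omega> r N \<phi> F"
proof -
  interpret prob_space \<mu> by fact
  have measurable: "f \<in> borel_measurable \<mu>" if "continuous_on \<Omega> f" for f :: "real^'d \<Rightarrow> real"
    using borel_measurable_continuous_on_restrict[OF that] measurable_cong_sets[OF assms(4) refl, of borel]
    by blast
  show ?thesis
    using sigma_w_L2_le_dist_A1r[of N \<phi> r F v m \<xi>] assms(3,5-8,10-13) measurable by auto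
qed

end
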